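(* For every $n\ge0$, the number of restricted ascent sequences of length $n$ equals the $n$-th Catalan number $C_n=\frac{1}{n+1}\binom{2n}{n}$.
   Context: For a sequence $(y_1,\dots,y_k)$ of integers, $\mathrm{asc}(y_1,\dots,y_k)=|\{1\le j<k: y_j<y_{j+1}\}|$. A restricted ascent sequence of length $n$ is a sequence $(x_1,\dots,x_n)$ of nonnegative integers with $x_1=0$ and, for all $2\le i\le n$, $m-1\le x_i\le 1+\mathrm{asc}(x_1,\dots,x_{i-1})$, where $m=\max(x_1,\dots,x_{i-1})$. The empty sequence is the unique restricted ascent sequence of length $0$. *)

theory Defs
  imports Complex_Main
begin

definition asc :: "nat list \<Rightarrow> nat" where
  "asc ys = card {j. j + 1 < length ys \<and> ys ! j < ys ! (j + 1)}"

definition restricted_ascent :: "nat list \<Rightarrow> bool" where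
  "restricted_ascent xs \<longleftrightarrow>
     (xs = [] \<or>
      (xs ! 0 = 0 \<and>
       (\<forall>i. 1 \<le> i \<and> i < length xs \<longrightarrow>
          int (Max (set (take i xs))) - 1 \<le> int (xs ! i) \<and>
          xs ! i \<le> 1 + asc (take i xs))))"

end

theory Submission
  imports Defs "HOL-Computational_Algebra.Formal_Power_Series"
begin

text \<open>
  A nonempty restricted ascent sequence with maximum \<open>m\<close> and \<open>a\<close> ascents has \<open>m \<le> a\<close> and
  ends in \<open>m\<close> or \<open>m - 1\<close>. Its continuations depend only on a single number \<open>p\<close>, its state:
  the next entries \<open>m - 1\<close> and \<open>m\<close> lead to the states \<open>p\<close> and \<open>p + 1\<close> (in some order), and an
  entry \<open>x > m\<close> leads to the state \<open>2(a + 1 - x) + 1\<close>. So the numbers of continuations satisfy a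
  linear recurrence, solved by the generating functions \<open>C^(p + 2) * (1 - X)^(p div 2)\<close> thanks to
  the equation \<open>C = 1 + X * C^2\<close> of the Catalan series \<open>C\<close>. Every sequence starts with \<open>0\<close>, in
  state \<open>0\<close>, so those of length \<open>k + 1\<close> are counted by \<open>[X^k] C^2 = [X^(k + 1)] C\<close>.
\<close>

unbundle fps_syntax

lemma asc_snoc:
  "asc (xs @ [x]) = asc xs + (if xs \<noteq> [] \<and> last xs < x then 1 else 0)"
proof -
  let ?A = "{j. j + 1 < length xs \<and> xs ! j < xs ! (j + 1)}"
  have last: "xs ! j = last xs" if "j < length xs" "\<not> Suc j < length xs" for j
  proof -
    have "j = length xs - 1" "xs \<noteq> []" using that by auto
    then show ?thesis by (simp add: last_conv_nth)
  qed
  have "{j. j + 1 < length (xs @ [x]) \<and> (xs @ [x]) ! j < (xs @ [x]) ! (j + 1)}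
        = ?A \<union> (if xs \<noteq> [] \<and> last xs < x then {length xs - 1} else {})"
    by (auto simp: nth_append last less_Suc_eq split: if_splits)
  moreover have "finite ?A" by (rule finite_subset[of _ "{..<length xs}"]) auto
  moreover have "length xs - 1 \<notin> ?A" by auto
  ultimately show ?thesis unfolding asc_def by auto
qed

lemma restricted_ascent_snoc:
  assumes "xs \<noteq> []"
  shows "restricted_ascent (xs @ [x]) \<longleftrightarrow>
           restricted_ascent xs \<and> Max (set xs) - 1 \<le> x \<and> x \<le> 1 + asc xs"
proof -
  have split_last: "(\<forall>i. 1 \<le> i \<and> i < Suc n \<longrightarrow> P i) \<longleftrightarrow>
      (\<forall>i. 1 \<le> i \<and> i < n \<longrightarrow> P i) \<and> (1 \<le> n \<longrightarrow> P n)" for P and n :: nat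
    by (auto simp: less_Suc_eq)
  have "int m - 1 \<le> int x \<longleftrightarrow> m - 1 \<le> x" for m :: nat by linarith
  with assms show ?thesis
    unfolding restricted_ascent_def length_append_singleton split_last
    by (simp add: nth_append Suc_le_eq)
qed

lemma restricted_ascent_appendD: "restricted_ascent (xs @ ys) \<Longrightarrow> restricted_ascent xs"
  unfolding restricted_ascent_def by (cases "xs = []") (auto simp: nth_append)

lemma restricted_ascent_Max_bounds:
  assumes "restricted_ascent xs" "xs \<noteq> []"
  shows "Max (set xs) \<le> asc xs \<and> Max (set xs) \<le> last xs + 1 \<and>
         (Max (set xs) = 0 \<longrightarrow> asc xs = 0)"
  using assms
proof (induction xs rule: rev_induct)
  case (snoc x xs)
  show ?case
  proof (cases "xs = []")
    case True
    with snoc.prems show ?thesis by (simp add: restricted_ascent_def asc_def)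
  next
    case False
    define m where "m = Max (set xs)"
    with snoc False have "m - 1 \<le> x" "x \<le> 1 + asc xs"
      and "m \<le> asc xs" "m \<le> last xs + 1" "m = 0 \<longrightarrow> asc xs = 0" "last xs \<le> m"
      by (auto simp: restricted_ascent_snoc)
    moreover have "Max (set (xs @ [x])) = max m x"
      using False by (simp add: m_def max.commute)
    ultimately show ?thesis
      using False by (simp add: asc_snoc max_def) linarith
  qed
qed simp

text \<open>
  For a sequence ending in its maximum \<open>m\<close> or in \<open>m - 1\<close>: \<open>a - m\<close> counts the ascents not spent on
  raising the maximum, and the parity records which of the two the last entry is.
\<close>

definition ras_state :: "nat list \<Rightarrow> nat" where
  "ras_state xs = (let m = Max (set xs); a = asc xs in
     if m = 0 then 0 else if last xs = m then 2 * (a - m) + 1 else 2 * (a - m) + 2)"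

lemma ras_state_snoc:
  assumes "xs \<noteq> []"
  shows "ras_state (xs @ [x]) =
           (let m = max (Max (set xs)) x; a = asc xs + (if last xs < x then 1 else 0) in
            if m = 0 then 0 else if x = m then 2 * (a - m) + 1 else 2 * (a - m) + 2)"
  using assms by (simp add: ras_state_def asc_snoc max.commute Let_def del: Max_less_iff)

lemma ras_state_snoc_above_Max:
  assumes "xs \<noteq> []" "Max (set xs) < x"
  shows "ras_state (xs @ [x]) = 2 * (asc xs + 1 - x) + 1"
proof -
  have "last xs < x" using assms by (meson Max_ge last_in_set finite_set le_less_trans)
  moreover have "0 < x" using assms(2) by linarith
  ultimately show ?thesis using assms by (simp add: ras_state_snoc Let_def del: Max_less_iff)
qed

lemma ras_state_snoc_Max:
  assumes "restricted_ascent xs" "xs \<noteq> []" "0 < Max (set xs)"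
  shows "(ras_state (xs @ [Max (set xs) - 1]), ras_state (xs @ [Max (set xs)]))
           \<in> {(ras_state xs + 1, ras_state xs), (ras_state xs, ras_state xs + 1)}"
proof -
  define m where "m = Max (set xs)"
  have "m \<le> asc xs" "m \<le> last xs + 1" "last xs \<le> m" "0 < m"
    using restricted_ascent_Max_bounds[OF assms(1,2)] assms(2,3) by (auto simp: m_def)
  then show ?thesis
    unfolding m_def[symmetric]
    using ras_state_snoc[OF assms(2), folded m_def] ras_state_def[of xs, folded m_def]
    by (cases "last xs = m") (auto simp: Let_def max_def)
qed

lemma sum_ras_state_snoc:
  fixes f :: "nat \<Rightarrow> 'a::comm_monoid_add"
  assumes R: "restricted_ascent xs" and ne: "xs \<noteq> []"
  shows "(\<Sum>x\<in>{Max (set xs) - 1..1 + asc xs}. f (ras_state (xs @ [x]))) =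
           f (ras_state xs) + f (ras_state xs + 1) + (\<Sum>j<(ras_state xs + 1) div 2. f (2 * j + 1))"
proof (cases "Max (set xs) = 0")
  case True
  then have "asc xs = 0" "ras_state xs = 0"
    using restricted_ascent_Max_bounds[OF R ne] by (simp_all add: ras_state_def)
  moreover have "ras_state (xs @ [0]) = 0" "ras_state (xs @ [1]) = 1"
    using True ras_state_snoc_above_Max[OF ne, of 1]
    by (simp_all add: ras_state_snoc[OF ne] \<open>asc xs = 0\<close>)
  moreover have "{0..1::nat} = {0, 1}" by auto
  ultimately show ?thesis using True by simp
next
  case False
  define m where "m = Max (set xs)"
  define a where "a = asc xs"
  have bounds: "m \<le> a" "m \<le> last xs + 1" "last xs \<le> m" "0 < m"
    using restricted_ascent_Max_bounds[OF R ne] ne False by (auto simp: m_def a_def)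
  have half: "(ras_state xs + 1) div 2 = a + 1 - m"
    using bounds by (simp add: ras_state_def Let_def flip: m_def a_def)
  have I: "{m - 1..1 + a} = insert (m - 1) (insert m {m + 1..a + 1})"
    using bounds by auto
  have old: "f (ras_state (xs @ [m - 1])) + f (ras_state (xs @ [m])) =
               f (ras_state xs) + f (ras_state xs + 1)"
    using ras_state_snoc_Max[OF R ne] False by (auto simp: add.commute simp flip: m_def)
  have new: "(\<Sum>x\<in>{m + 1..a + 1}. f (ras_state (xs @ [x]))) = (\<Sum>j<a + 1 - m. f (2 * j + 1))"
  proof (rule sum.reindex_bij_witness[of _ "\<lambda>j. a + 1 - j" "\<lambda>x. a + 1 - x"])
    fix x assume "x \<in> {m + 1..a + 1}"
    then show "f (2 * (a + 1 - x) + 1) = f (ras_state (xs @ [x]))"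
      using ras_state_snoc_above_Max[OF ne, of x] by (simp add: m_def a_def)
  qed auto
  have "m - 1 \<notin> insert m {m + 1..a + 1}" "m \<notin> {m + 1..a + 1}"
    using bounds by auto
  then have "(\<Sum>x\<in>{m - 1..1 + a}. f (ras_state (xs @ [x]))) =
      f (ras_state (xs @ [m - 1])) + f (ras_state (xs @ [m])) +
      (\<Sum>x\<in>{m + 1..a + 1}. f (ras_state (xs @ [x])))"
    unfolding I by (simp add: add.assoc)
  then show ?thesis
    unfolding old new half m_def[symmetric] a_def[symmetric] .
qed

fun ras_continuations :: "nat \<Rightarrow> nat \<Rightarrow> nat" where
  "ras_continuations 0 p = 1"
| "ras_continuations (Suc k) p =
     ras_continuations k p + ras_continuations k (p + 1) +
     (\<Sum>j<(p + 1) div 2. ras_continuations k (2 * j + 1))"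

lemma card_restricted_ascent_continuations:
  assumes "restricted_ascent ys" "ys \<noteq> []"
  shows "finite {zs. length zs = k \<and> restricted_ascent (ys @ zs)} \<and>
         card {zs. length zs = k \<and> restricted_ascent (ys @ zs)} = ras_continuations k (ras_state ys)"
  using assms
proof (induction k arbitrary: ys)
  case 0
  then have "{zs. length zs = 0 \<and> restricted_ascent (ys @ zs)} = {[]}" by auto
  then show ?case by simp
next
  case (Suc k)
  let ?I = "{Max (set ys) - 1..1 + asc ys}"
  let ?C = "\<lambda>x. {zs. length zs = k \<and> restricted_ascent ((ys @ [x]) @ zs)}"
  have first_step:
    "{zs. length zs = Suc k \<and> restricted_ascent (ys @ zs)} = (\<Union>x\<in>?I. (#) x ` ?C x)"
  proof (intro set_eqI iffI)
    fix zs assume "zs \<in> {zs. length zs = Suc k \<and> restricted_ascent (ys @ zs)}"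
    then obtain x zs' where zs: "zs = x # zs'" "length zs' = k" "restricted_ascent ((ys @ [x]) @ zs')"
      by (cases zs) auto
    then have "restricted_ascent (ys @ [x])" by (blast intro: restricted_ascent_appendD)
    then have "x \<in> ?I" using restricted_ascent_snoc[OF Suc.prems(2)] by simp
    with zs show "zs \<in> (\<Union>x\<in>?I. (#) x ` ?C x)" by auto
  qed auto
  have IH: "finite (?C x) \<and> card (?C x) = ras_continuations k (ras_state (ys @ [x]))"
    if "x \<in> ?I" for x
  proof (rule Suc.IH)
    show "restricted_ascent (ys @ [x])"
      using that Suc.prems restricted_ascent_snoc[OF Suc.prems(2)] by simp
  qed simp
  have "card (\<Union>x\<in>?I. (#) x ` ?C x) = (\<Sum>x\<in>?I. card ((#) x ` ?C x))"
    by (rule card_UN_disjoint) (use IH in auto)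
  also have "\<dots> = (\<Sum>x\<in>?I. ras_continuations k (ras_state (ys @ [x])))"
    using IH by (simp add: card_image)
  also have "\<dots> = ras_continuations (Suc k) (ras_state ys)"
    using sum_ras_state_snoc[OF Suc.prems, of "ras_continuations k"] by simp
  finally show ?case using first_step IH by simp
qed

lemma card_restricted_ascent_Suc:
  "card {xs. length xs = Suc k \<and> restricted_ascent xs} = ras_continuations k 0"
proof -
  have "{xs. length xs = Suc k \<and> restricted_ascent xs} =
          (#) 0 ` {zs. length zs = k \<and> restricted_ascent ([0] @ zs)}"
  proof (intro set_eqI iffI)
    fix xs assume "xs \<in> {xs. length xs = Suc k \<and> restricted_ascent xs}"
    then obtain x zs where "xs = x # zs" "length zs = k" "restricted_ascent (x # zs)"
      by (cases xs) auto
    moreover from this have "x = 0" by (simp add: restricted_ascent_def)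
    ultimately show "xs \<in> (#) 0 ` {zs. length zs = k \<and> restricted_ascent ([0] @ zs)}" by auto
  qed auto
  moreover have "restricted_ascent [0]" "ras_state [0] = 0"
    by (simp_all add: restricted_ascent_def ras_state_def)
  ultimately show ?thesis
    using card_restricted_ascent_continuations[of "[0]" k] by (simp add: card_image)
qed

lemma Abs_fps_scaled_gbinomial_mult:
  fixes a b c :: "'a::field_char_0"
  shows "Abs_fps (\<lambda>n. c ^ n * (a gchoose n)) * Abs_fps (\<lambda>n. c ^ n * (b gchoose n)) =
           Abs_fps (\<lambda>n. c ^ n * ((a + b) gchoose n))"
proof (rule fps_ext)
  fix n
  have "(\<Sum>i=0..n. c ^ i * (a gchoose i) * (c ^ (n - i) * (b gchoose (n - i)))) =
          (\<Sum>i=0..n. c ^ n * ((a gchoose i) * (b gchoose (n - i))))"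
    by (intro sum.cong) (simp_all add: power_add [symmetric] algebra_simps)
  then show "(Abs_fps (\<lambda>n. c ^ n * (a gchoose n)) * Abs_fps (\<lambda>n. c ^ n * (b gchoose n))) $ n =
               Abs_fps (\<lambda>n. c ^ n * ((a + b) gchoose n)) $ n"
    by (simp add: fps_mult_nth gbinomial_Vandermonde flip: sum_distrib_left)
qed

definition fps_sqrt_1_minus_4X :: "real fps" where
  "fps_sqrt_1_minus_4X = Abs_fps (\<lambda>n. (-4) ^ n * ((1/2) gchoose n))"

lemma fps_sqrt_1_minus_4X_squared: "fps_sqrt_1_minus_4X ^ 2 = 1 - 4 * fps_X"
proof -
  have "(1::real) gchoose n = real (1 choose n)" for n
    by (metis binomial_gbinomial of_nat_1)
  then have "(1::real) gchoose n = (if n \<le> 1 then 1 else 0)" for n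
    by (cases n) (simp_all add: binomial_eq_0)
  then have "Abs_fps (\<lambda>n. (-4) ^ n * ((1::real) gchoose n)) = 1 - 4 * fps_X"
    by (intro fps_ext) (auto simp: numeral_fps_const le_Suc_eq)
  then show ?thesis
    by (simp add: fps_sqrt_1_minus_4X_def power2_eq_square Abs_fps_scaled_gbinomial_mult)
qed

lemma central_binomial_Suc:
  "(n + 1) * ((2 * Suc n) choose Suc n) = 2 * (2 * n + 1) * ((2 * n) choose n)"
proof -
  have "Suc n * (Suc (Suc (2 * n)) choose Suc n) = Suc (Suc (2 * n)) * (Suc (2 * n) choose n)"
    by (rule Suc_times_binomial)
  moreover have "Suc n * (Suc (2 * n) choose Suc n) = Suc (2 * n) * ((2 * n) choose n)"
    by (rule Suc_times_binomial)
  moreover have "Suc (2 * n) choose Suc n = Suc (2 * n) choose n"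
    using binomial_symmetric[of "Suc n" "Suc (2 * n)"] by simp
  ultimately show ?thesis by (simp add: algebra_simps)
qed

lemma fps_sqrt_1_minus_4X_nth_Suc:
  "fps_sqrt_1_minus_4X $ Suc n = - 2 * real ((2 * n) choose n) / (n + 1)"
proof (induction n)
  case (Suc n)
  have "real (Suc (Suc n)) * ((1/2) gchoose Suc (Suc n)) = (1/2 - real (Suc n)) * ((1/2) gchoose Suc n)"
    using gbinomial_mult_1[of "1/2::real" "Suc n"] by (simp add: algebra_simps)
  then have g: "(1/2) gchoose Suc (Suc n) = (1/2 - real (Suc n)) / (n + 2) * ((1/2 :: real) gchoose Suc n)"
    by (simp add: field_simps)
  have "fps_sqrt_1_minus_4X $ Suc (Suc n) = 2 * (2 * n + 1) / (n + 2) * fps_sqrt_1_minus_4X $ Suc n"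
    unfolding fps_sqrt_1_minus_4X_def fps_nth_Abs_fps g by (simp add: field_simps)
  also have "\<dots> = - 2 * real ((2 * Suc n) choose Suc n) / (Suc n + 1)"
  proof -
    have "(real n + 1) * real ((2 * Suc n) choose Suc n) = 2 * (2 * n + 1) * real ((2 * n) choose n)"
      using arg_cong[OF central_binomial_Suc[of n], of real]
      by (simp only: of_nat_mult of_nat_add of_nat_1 of_nat_numeral)
    then have b: "real ((2 * Suc n) choose Suc n) = 2 * (2 * n + 1) / (n + 1) * real ((2 * n) choose n)"
      by (simp add: field_simps del: binomial_Suc_Suc)
    show ?thesis unfolding b Suc.IH by (simp add: divide_simps)
  qed
  finally show ?case .
qed (simp add: fps_sqrt_1_minus_4X_def)

definition catalan_fps :: "real fps" where
  "catalan_fps = Abs_fps (\<lambda>n. real ((2 * n) choose n) / (n + 1))"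

lemma catalan_fps_via_sqrt: "2 * fps_X * catalan_fps = 1 - fps_sqrt_1_minus_4X"
proof (rule fps_ext)
  fix n
  show "(2 * fps_X * catalan_fps) $ n = (1 - fps_sqrt_1_minus_4X) $ n"
    by (cases n)
      (simp_all add: catalan_fps_def fps_sqrt_1_minus_4X_nth_Suc numeral_fps_const mult.assoc,
       simp add: fps_sqrt_1_minus_4X_def)
qed

lemma catalan_fps_eq: "catalan_fps = 1 + fps_X * catalan_fps ^ 2"
proof -
  let ?H = "fps_X * catalan_fps"
  have "4 * (?H ^ 2 - ?H + fps_X) = (1 - 2 * ?H) ^ 2 - (1 - 4 * fps_X)"
    by (simp add: algebra_simps power2_eq_square)
  also have "\<dots> = 0"
    using catalan_fps_via_sqrt fps_sqrt_1_minus_4X_squared by (simp add: mult.assoc)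
  finally have "fps_const 4 * (?H ^ 2 - ?H + fps_X) = 0"
    by (simp only: numeral_fps_const)
  then have "?H ^ 2 - ?H + fps_X = 0" by simp
  moreover have "fps_X * (1 + fps_X * catalan_fps ^ 2 - catalan_fps) = ?H ^ 2 - ?H + fps_X"
    by (simp add: algebra_simps power2_eq_square)
  ultimately show ?thesis by simp
qed

definition ras_fps :: "nat \<Rightarrow> real fps" where
  "ras_fps p = catalan_fps ^ (p + 2) * (1 - fps_X) ^ (p div 2)"

lemma ras_fps_Suc: "ras_fps (Suc p) = catalan_fps * (1 - fps_X) ^ (p mod 2) * ras_fps p"
proof -
  have "Suc p div 2 = p div 2 + p mod 2" by presburger
  then show ?thesis by (simp add: ras_fps_def power_add)
qed

lemma ras_fps_Suc_diff:
  "ras_fps (Suc p) - ras_fps p =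
     fps_X * (ras_fps (p + 2) - ras_fps p + (if even p then ras_fps (p + 1) else 0))"
proof -
  let ?C = catalan_fps and ?K = "ras_fps p"
  have "ras_fps (Suc p) - ras_fps p -
          fps_X * (ras_fps (p + 2) - ras_fps p + (if even p then ras_fps (p + 1) else 0)) =
        ?K * (1 - fps_X) * (?C - (1 + fps_X * ?C ^ 2))"
  proof (cases "even p")
    case True
    then have "p mod 2 = 0" "Suc p mod 2 = 1" by presburger+
    then show ?thesis
      using True
      by (simp add: ras_fps_Suc[of "Suc p"] ras_fps_Suc[of p] algebra_simps power2_eq_square)
  next
    case False
    then have "p mod 2 = 1" "Suc p mod 2 = 0" by presburger+
    then show ?thesis
      using False
      by (simp add: ras_fps_Suc[of "Suc p"] ras_fps_Suc[of p] algebra_simps power2_eq_square)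
  qed
  then show ?thesis by (simp flip: catalan_fps_eq)
qed

lemma ras_fps_rec:
  "ras_fps p = 1 + fps_X * (ras_fps p + ras_fps (p + 1) + (\<Sum>j<(p + 1) div 2. ras_fps (2 * j + 1)))"
proof (induction p)
  case 0
  have "fps_X * catalan_fps ^ 2 = catalan_fps - 1"
    using catalan_fps_eq by (simp add: algebra_simps)
  have "1 + fps_X * (catalan_fps ^ 2 + catalan_fps ^ 3) =
          1 + fps_X * catalan_fps ^ 2 * (1 + catalan_fps)"
    by (simp add: algebra_simps power2_eq_square power3_eq_cube)
  also have "\<dots> = catalan_fps ^ 2"
    unfolding \<open>fps_X * catalan_fps ^ 2 = catalan_fps - 1\<close>
    by (simp add: algebra_simps power2_eq_square)
  finally have "catalan_fps ^ 2 = 1 + fps_X * (catalan_fps ^ 2 + catalan_fps ^ 3)" ..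
  moreover have "ras_fps 0 = catalan_fps ^ 2" "ras_fps 1 = catalan_fps ^ 3"
    by (simp_all add: ras_fps_def power2_eq_square power3_eq_cube)
  ultimately show ?case by simp
next
  case (Suc p)
  let ?S = "\<lambda>q. \<Sum>j<(q + 1) div 2. ras_fps (2 * j + 1)"
  let ?e = "if even p then ras_fps (p + 1) else 0"
  have S: "?S (Suc p) = ?S p + ?e"
  proof (cases "even p")
    case True
    then have "(Suc p + 1) div 2 = Suc ((p + 1) div 2)" "2 * ((p + 1) div 2) + 1 = p + 1"
      by presburger+
    then show ?thesis using True by simp
  next
    case False
    then have "(Suc p + 1) div 2 = (p + 1) div 2" by presburger
    then show ?thesis using False by simp
  qed
  have "ras_fps (Suc p) = ras_fps p + (ras_fps (Suc p) - ras_fps p)" by simp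
  also have "\<dots> = 1 + fps_X * (ras_fps p + ras_fps (p + 1) + ?S p) +
                     fps_X * (ras_fps (p + 2) - ras_fps p + ?e)"
    by (subst Suc.IH, subst ras_fps_Suc_diff) (rule refl)
  also have "\<dots> = 1 + fps_X * (ras_fps (Suc p) + ras_fps (Suc p + 1) + (?S p + ?e))"
    by (simp add: algebra_simps)
  finally show ?case by (simp only: S)
qed

lemma ras_continuations_eq_nth: "real (ras_continuations k p) = ras_fps p $ k"
proof (induction k arbitrary: p)
  case 0
  show ?case by (subst ras_fps_rec) simp
next
  case (Suc k)
  show ?case by (subst ras_fps_rec) (simp add: fps_sum_nth Suc.IH)
qed

theorem theorem10:
  fixes n :: nat
  shows "real (card {xs. length xs = n \<and> restricted_ascent xs})
           = real ((2 * n) choose n) / real (n + 1)"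
proof (cases n)
  case 0
  have "{xs. length xs = 0 \<and> restricted_ascent xs} = {[]}"
    by (auto simp: restricted_ascent_def)
  with 0 show ?thesis by simp
next
  case (Suc k)
  have "real (card {xs. length xs = Suc k \<and> restricted_ascent xs}) = ras_fps 0 $ k"
    by (simp add: card_restricted_ascent_Suc ras_continuations_eq_nth)
  also have "\<dots> = (1 + fps_X * catalan_fps ^ 2) $ Suc k"
    by (simp add: ras_fps_def power2_eq_square)
  also have "\<dots> = catalan_fps $ Suc k"
    by (simp flip: catalan_fps_eq)
  finally show ?thesis
    using Suc by (simp add: catalan_fps_def)
qed

end
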